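(* In the setting below, for each $n\in\mathbb{N}_0$ and $i,j=1,\dots,N$, $$|x_i(s)-x_j(t)|\le d(t_{2n})\quad\forall s,t\in[t_{2n},t_{2n+1}].$$
   Context: Setting: $N\ge2$; $\psi:\mathbb{R}^d\times\mathbb{R}^d\to\mathbb{R}$ positive, bounded, continuous, $K:=\|\psi\|_\infty$; $\{t_n\}_{n\in\mathbb{N}_0}$ increasing, nonnegative, $t_0=0$, $t_n\to\infty$; $\alpha(0)=1$, $\alpha=1$ on $(t_{2n},t_{2n+1})$, $\alpha=-1$ on $[t_{2n+1},t_{2n+2}]$; $\{x_i\}$ solves $x_i'(t)=\frac1{N-1}\sum_{j\ne i}\alpha(t)\psi(x_i(t),x_j(t))(x_j(t)-x_i(t))$, $t>0$, $x_i(0)=x_i^0\in\mathbb{R}^d$ (continuous, $C^1$ on each $(t_n,t_{n+1})$). $d(t):=\max_{i,j}|x_i(t)-x_j(t)|$. Standing assumptions: $t_{2n+2}-t_{2n+1}<\frac{\ln 2}{K}$ for all $n$; $\sum_{p\ge0}\ln\frac{e^{K(t_{2p+2}-t_{2p+1})}}{2-e^{K(t_{2p+2}-t_{2p+1})}}<\infty$; $\sum_{p\ge0}\ln\max\{1-e^{-K(t_{2p+1}-t_{2p})},1-\frac{\psi_0}{K}(1-e^{-K(t_{2p+1}-t_{2p})})\}=-\infty$, with $\psi_0=\min_{|y|,|z|\le M^0}\psi(y,z)$, $M^0=e^{K\sum_{p}(t_{2p+2}-t_{2p+1})}\max_i|x_i^0|$. *)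

theory Defs
  imports "HOL-Analysis.Analysis"
begin

definition alpha :: "(nat \<Rightarrow> real) \<Rightarrow> real \<Rightarrow> real" where
  "alpha tt s = (if s = 0 then 1
     else if (\<exists>n. tt (2*n) < s \<and> s < tt (2*n+1)) then 1 else -1)"

definition Kconst :: "('a \<Rightarrow> 'a \<Rightarrow> real) \<Rightarrow> real" where
  "Kconst psi = (SUP p\<in>UNIV. \<bar>psi (fst p) (snd p)\<bar>)"

definition diam :: "nat \<Rightarrow> (nat \<Rightarrow> real \<Rightarrow> 'a::real_normed_vector) \<Rightarrow> real \<Rightarrow> real" where
  "diam N x s = Max {norm (x i s - x j s) | i j. i \<in> {1..N} \<and> j \<in> {1..N}}"

definition rhs :: "nat \<Rightarrow> (nat \<Rightarrow> real) \<Rightarrow> ('a \<Rightarrow> 'a \<Rightarrow> real) \<Rightarrow> (nat \<Rightarrow> real \<Rightarrow> 'a::real_normed_vector) \<Rightarrow> nat \<Rightarrow> real \<Rightarrow> 'a" where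
  "rhs N tt psi x i s = (1 / (real N - 1)) *\<^sub>R
     (\<Sum>j\<in>{1..N} - {i}. (alpha tt s * psi (x i s) (x j s)) *\<^sub>R (x j s - x i s))"

definition M0 :: "nat \<Rightarrow> (nat \<Rightarrow> real) \<Rightarrow> ('a \<Rightarrow> 'a \<Rightarrow> real) \<Rightarrow> (nat \<Rightarrow> real \<Rightarrow> 'a::real_normed_vector) \<Rightarrow> real" where
  "M0 N tt psi x = exp (Kconst psi * (\<Sum>p. tt (2*p+2) - tt (2*p+1))) * Max ((\<lambda>i. norm (x i 0)) ` {1..N})"

definition psi0 :: "nat \<Rightarrow> (nat \<Rightarrow> real) \<Rightarrow> ('a \<Rightarrow> 'a \<Rightarrow> real) \<Rightarrow> (nat \<Rightarrow> real \<Rightarrow> 'a::real_normed_vector) \<Rightarrow> real" where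
  "psi0 N tt psi x = (INF p\<in>cball 0 (M0 N tt psi x) \<times> cball 0 (M0 N tt psi x). psi (fst p) (snd p))"

end

theory Submission
  imports Defs
begin

text \<open>During an attractive phase every agent moves towards a positively weighted combination
  of the others. Hence, for any point p, the agent farthest from p never moves away from p,
  so any closed ball containing all agents at time t(2n) contains them during the
  whole phase. The ball of radius d(t(2n)) around x k (t(2n)) thus contains
  x j \<tau> for every k; consequently the ball of the same radius around x j \<tau>
  contains all agents at time t(2n), and so contains x i s.\<close>

lemma has_real_derivative_power2_norm_diff:
  fixes y :: "real \<Rightarrow> 'a::real_inner"
  assumes "(y has_vector_derivative v) (at s)"
  shows "((\<lambda>t. norm (y t - p)^2) has_real_derivative 2 * inner (y s - p) v) (at s)"
proof -
  have yd: "((\<lambda>t. y t - p) has_derivative (\<lambda>h. h *\<^sub>R v)) (at s)"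
    using assms unfolding has_vector_derivative_def by (auto intro!: derivative_eq_intros)
  have "((\<lambda>t. inner (y t - p) (y t - p)) has_derivative (\<lambda>h. (2 * inner (y s - p) v) * h)) (at s)"
    by (rule has_derivative_eq_rhs, rule has_derivative_inner[OF yd yd])
      (auto simp: inner_commute algebra_simps)
  then show ?thesis
    by (simp add: power2_norm_eq_inner has_field_derivative_def)
qed

lemma inner_diff_nonpos_if_norm_le:
  fixes u w :: "'a::real_inner"
  assumes "norm w \<le> norm u"
  shows "inner u (w - u) \<le> 0"
proof -
  have "inner u (w - u) = inner u w - norm u ^ 2"
    by (simp add: inner_diff_right power2_norm_eq_inner)
  also have "\<dots> \<le> norm u * norm w - norm u ^ 2"
    using norm_cauchy_schwarz[of u w] by simp
  also have "\<dots> = norm u * (norm w - norm u)"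
    by (simp add: algebra_simps power2_eq_square)
  also have "\<dots> \<le> 0"
    using assms by (simp add: mult_nonneg_nonpos)
  finally show ?thesis .
qed

lemma inner_weighted_sum_towards_nonpos:
  fixes u p :: "'a::real_inner" and y :: "'i \<Rightarrow> 'a"
  assumes "\<And>l. l \<in> J \<Longrightarrow> 0 \<le> w l"
    and "\<And>l. l \<in> J \<Longrightarrow> norm (y l - p) \<le> norm (u - p)"
  shows "inner (u - p) (\<Sum>l\<in>J. w l *\<^sub>R (y l - u)) \<le> 0"
  unfolding inner_sum_right
proof (rule sum_nonpos)
  fix l assume l: "l \<in> J"
  have "inner (u - p) ((y l - p) - (u - p)) \<le> 0"
    by (rule inner_diff_nonpos_if_norm_le) (use assms(2)[OF l] in simp)
  then show "inner (u - p) (w l *\<^sub>R (y l - u)) \<le> 0"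
    using assms(1)[OF l] by (simp add: mult_nonneg_nonpos)
qed

lemma finite_family_first_crossing:
  fixes g :: "'i \<Rightarrow> real \<Rightarrow> real"
  assumes fin: "finite I"
    and cont: "\<And>k. k \<in> I \<Longrightarrow> continuous_on {a..s} (g k)"
    and init: "\<And>k. k \<in> I \<Longrightarrow> g k a < C"
    and k: "k \<in> I" and reached_at_s: "C \<le> g k s" and "a \<le> s"
  obtains t l where "t \<in> {a<..s}" "l \<in> I" "C \<le> g l t"
    and "\<And>m u. m \<in> I \<Longrightarrow> u \<in> {a..<t} \<Longrightarrow> g m u < C"
proof -
  define S where "S = (\<Union>l\<in>I. {u \<in> {a..s}. C \<le> g l u})"
  have "s \<in> S"
    using reached_at_s k \<open>a \<le> s\<close> unfolding S_def by auto
  moreover have "bdd_below S"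
    unfolding S_def by (rule bdd_belowI[of _ a]) auto
  moreover have "closed S"
  proof -
    have "closed {u \<in> {a..s}. C \<le> g l u}" if "l \<in> I" for l
      by (rule continuous_on_closed_Collect_le) (simp_all add: cont[OF that])
    then show ?thesis
      unfolding S_def using fin by (intro closed_UN) auto
  qed
  ultimately have "Inf S \<in> S"
    by (intro closed_contains_Inf) auto
  define t where "t = Inf S"
  obtain l where l: "l \<in> I" and t: "t \<in> {a..s}" and reached: "C \<le> g l t"
    using \<open>Inf S \<in> S\<close> unfolding S_def t_def by blast
  have before: "g m u < C" if "m \<in> I" "u \<in> {a..<t}" for m u
  proof (rule ccontr)
    assume "\<not> g m u < C"
    then have "u \<in> S" using that t unfolding S_def by (auto simp: not_less)
    then have "t \<le> u" unfolding t_def using \<open>bdd_below S\<close> by (rule cInf_lower)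
    then show False using that by simp
  qed
  have "t \<noteq> a"
    using init[OF l] reached by auto
  with t have "t \<in> {a<..s}" by auto
  then show ?thesis
    using that l reached before by blast
qed

text \<open>At the first time some member reaches the barrier C, that member is a maximiser,
  so it was strictly above C just before.\<close>

lemma finite_family_less_bound_strict:
  fixes g g' :: "'i \<Rightarrow> real \<Rightarrow> real"
  assumes fin: "finite I"
    and cont: "\<And>k. k \<in> I \<Longrightarrow> continuous_on {a..b} (g k)"
    and deriv: "\<And>k s. k \<in> I \<Longrightarrow> s \<in> {a<..<b} \<Longrightarrow> (g k has_real_derivative g' k s) (at s)"
    and maximiser_decreasing: "\<And>k s. k \<in> I \<Longrightarrow> s \<in> {a<..<b} \<Longrightarrow>
          (\<And>l. l \<in> I \<Longrightarrow> g l s \<le> g k s) \<Longrightarrow> g' k s < 0"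
    and init: "\<And>k. k \<in> I \<Longrightarrow> g k a < C"
    and k: "k \<in> I" and s: "s \<in> {a..<b}"
  shows "g k s < C"
proof (rule ccontr)
  assume "\<not> g k s < C"
  have cont_s: "continuous_on {a..s} (g m)" if "m \<in> I" for m
    by (rule continuous_on_subset[OF cont[OF that]]) (use s in auto)
  obtain t l where t: "t \<in> {a<..s}" and l: "l \<in> I" and reached: "C \<le> g l t"
    and before: "\<And>m u. m \<in> I \<Longrightarrow> u \<in> {a..<t} \<Longrightarrow> g m u < C"
    by (rule finite_family_first_crossing[where g = g and s = s, OF fin cont_s init k])
      (use \<open>\<not> g k s < C\<close> s in auto)
  have "a < t" "t < b"
    using t s by auto
  have "g m t \<le> g l t" if m: "m \<in> I" for m
  proof -
    have "g m t \<le> C"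
    proof (rule continuous_le_on_closure[of "{a..<t}" "g m"])
      show "continuous_on (closure {a..<t}) (g m)"
        by (rule continuous_on_subset[OF cont[OF m]]) (use \<open>a < t\<close> \<open>t < b\<close> in auto)
      show "t \<in> closure {a..<t}"
        using \<open>a < t\<close> by simp
      show "g m u \<le> C" if "u \<in> {a..<t}" for u
        using before[OF m that] by simp
    qed
    then show ?thesis using reached by linarith
  qed
  then have "g' l t < 0"
    using maximiser_decreasing[OF l] \<open>a < t\<close> \<open>t < b\<close> by simp
  then obtain d where "d > 0" and left: "\<And>h. h > 0 \<Longrightarrow> h < d \<Longrightarrow> g l t < g l (t - h)"
    using DERIV_neg_dec_left[OF deriv[OF l]] \<open>a < t\<close> \<open>t < b\<close> by auto
  define h where "h = min d (t - a) / 2"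
  have "h > 0" "h < d" "t - h \<in> {a..<t}"
    using \<open>d > 0\<close> \<open>a < t\<close> unfolding h_def by (auto simp: min_def field_simps)
  then show False
    using left before[OF l] reached by fastforce
qed

text \<open>Tilting the family by -\<delta>(s - a) does not change the maximisers but makes their
  derivatives negative, so the strict version applies.\<close>

lemma finite_family_le_bound_before_end:
  fixes g g' :: "'i \<Rightarrow> real \<Rightarrow> real"
  assumes fin: "finite I"
    and cont: "\<And>k. k \<in> I \<Longrightarrow> continuous_on {a..b} (g k)"
    and deriv: "\<And>k s. k \<in> I \<Longrightarrow> s \<in> {a<..<b} \<Longrightarrow> (g k has_real_derivative g' k s) (at s)"
    and maximiser_nonincreasing: "\<And>k s. k \<in> I \<Longrightarrow> s \<in> {a<..<b} \<Longrightarrow>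
          (\<And>l. l \<in> I \<Longrightarrow> g l s \<le> g k s) \<Longrightarrow> g' k s \<le> 0"
    and init: "\<And>k. k \<in> I \<Longrightarrow> g k a \<le> C"
    and k: "k \<in> I" and s: "s \<in> {a..<b}"
  shows "g k s \<le> C"
proof (rule field_le_epsilon)
  fix e :: real assume "0 < e"
  define \<delta> where "\<delta> = e / (b - a + 1)"
  have "\<delta> > 0" using \<open>0 < e\<close> s unfolding \<delta>_def by auto
  have "g k s - \<delta> * (s - a) < C + \<delta>"
  proof (rule finite_family_less_bound_strict[where g' = "\<lambda>k s. g' k s - \<delta>", OF fin _ _ _ _ k s])
    show "continuous_on {a..b} (\<lambda>s. g k s - \<delta> * (s - a))" if "k \<in> I" for k
      using cont[OF that] by (intro continuous_intros)
    show "((\<lambda>s. g k s - \<delta> * (s - a)) has_real_derivative g' k s - \<delta>) (at s)"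
      if "k \<in> I" "s \<in> {a<..<b}" for k s
      using deriv[OF that] by (auto intro!: derivative_eq_intros)
    show "g' k s - \<delta> < 0"
      if "k \<in> I" "s \<in> {a<..<b}"
        and "\<And>l. l \<in> I \<Longrightarrow> g l s - \<delta> * (s - a) \<le> g k s - \<delta> * (s - a)" for k s
    proof -
      have "g' k s \<le> 0"
        by (rule maximiser_nonincreasing[OF that(1,2)]) (use that(3) in simp)
      then show ?thesis using \<open>\<delta> > 0\<close> by simp
    qed
    show "g k a - \<delta> * (a - a) < C + \<delta>" if "k \<in> I" for k
      using init[OF that] \<open>\<delta> > 0\<close> by simp
  qed
  moreover have "\<delta> * (s - a) + \<delta> \<le> e"
  proof -
    have "\<delta> * (s - a) + \<delta> \<le> \<delta> * (b - a + 1)"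
      using \<open>\<delta> > 0\<close> s by (simp add: algebra_simps)
    also have "\<dots> = e" using s unfolding \<delta>_def by simp
    finally show ?thesis .
  qed
  ultimately show "g k s \<le> C + e" by linarith
qed

lemma finite_family_le_bound:
  fixes g g' :: "'i \<Rightarrow> real \<Rightarrow> real"
  assumes fin: "finite I"
    and cont: "\<And>k. k \<in> I \<Longrightarrow> continuous_on {a..b} (g k)"
    and deriv: "\<And>k s. k \<in> I \<Longrightarrow> s \<in> {a<..<b} \<Longrightarrow> (g k has_real_derivative g' k s) (at s)"
    and maximiser_nonincreasing: "\<And>k s. k \<in> I \<Longrightarrow> s \<in> {a<..<b} \<Longrightarrow>
          (\<And>l. l \<in> I \<Longrightarrow> g l s \<le> g k s) \<Longrightarrow> g' k s \<le> 0"
    and init: "\<And>k. k \<in> I \<Longrightarrow> g k a \<le> C"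
    and k: "k \<in> I" and s: "s \<in> {a..b}"
  shows "g k s \<le> C"
proof -
  have before_end: "g k u \<le> C" if "u \<in> {a..<b}" for u
    using fin cont deriv maximiser_nonincreasing init k that
    by (rule finite_family_le_bound_before_end)
  consider "s < b" | "s = a" | "a < b" "s = b"
    using s by fastforce
  then show ?thesis
  proof cases
    case 3
    show ?thesis
    proof (rule continuous_le_on_closure[of "{a..<b}" "g k"])
      show "continuous_on (closure {a..<b}) (g k)"
        using cont[OF k] 3 by simp
      show "s \<in> closure {a..<b}"
        using 3 by simp
    qed (rule before_end)
  qed (use s before_end init[OF k] in auto)
qed

lemma ball_invariant_if_farthest_moves_inward:
  fixes x D :: "'i \<Rightarrow> real \<Rightarrow> 'a::real_inner"
  assumes fin: "finite I"
    and cont: "\<And>k. k \<in> I \<Longrightarrow> continuous_on {a..b} (x k)"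
    and deriv: "\<And>k s. k \<in> I \<Longrightarrow> s \<in> {a<..<b} \<Longrightarrow> (x k has_vector_derivative D k s) (at s)"
    and inward: "\<And>k s. k \<in> I \<Longrightarrow> s \<in> {a<..<b} \<Longrightarrow>
          (\<And>l. l \<in> I \<Longrightarrow> norm (x l s - p) \<le> norm (x k s - p)) \<Longrightarrow> inner (x k s - p) (D k s) \<le> 0"
    and init: "\<And>k. k \<in> I \<Longrightarrow> norm (x k a - p) \<le> R"
    and k: "k \<in> I" and s: "s \<in> {a..b}"
  shows "norm (x k s - p) \<le> R"
proof -
  have "0 \<le> R"
    using init[OF k] norm_ge_zero order_trans by blast
  have "norm (x k s - p)^2 \<le> R^2"
  proof (rule finite_family_le_bound[where g' = "\<lambda>k s. 2 * inner (x k s - p) (D k s)", OF fin _ _ _ _ k s])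
    show "continuous_on {a..b} (\<lambda>s. norm (x k s - p)^2)" if "k \<in> I" for k
      using cont[OF that] by (intro continuous_intros)
    show "((\<lambda>s. norm (x k s - p)^2) has_real_derivative 2 * inner (x k s - p) (D k s)) (at s)"
      if "k \<in> I" "s \<in> {a<..<b}" for k s
      by (rule has_real_derivative_power2_norm_diff[OF deriv[OF that]])
    show "2 * inner (x k s - p) (D k s) \<le> 0"
      if "k \<in> I" "s \<in> {a<..<b}"
        and "\<And>l. l \<in> I \<Longrightarrow> norm (x l s - p)^2 \<le> norm (x k s - p)^2" for k s
    proof -
      have "inner (x k s - p) (D k s) \<le> 0"
        by (rule inward[OF that(1,2) power2_le_imp_le[OF that(3) norm_ge_zero]])
      then show ?thesis by simp
    qed
    show "norm (x k a - p)^2 \<le> R^2" if "k \<in> I" for k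
      using init[OF that] by (simp add: power_mono)
  qed
  then show ?thesis
    using \<open>0 \<le> R\<close> by (rule power2_le_imp_le)
qed

lemma alpha_eq_1_attractive_phase:
  assumes "0 \<le> tt (2*n)" and "s \<in> {tt (2*n)<..<tt (2*n+1)}"
  shows "alpha tt s = 1"
proof -
  have "s \<noteq> 0" "\<exists>m. tt (2*m) < s \<and> s < tt (2*m+1)"
    using assms by auto
  then show ?thesis unfolding alpha_def by simp
qed

lemma inner_rhs_nonpos_if_farthest:
  assumes "N \<ge> 1" and psi_nonneg: "\<And>y z. 0 \<le> psi y z"
    and "alpha tt s = 1"
    and farthest: "\<And>l. l \<in> {1..N} \<Longrightarrow> norm (x l s - p) \<le> norm (x k s - p)"
  shows "inner (x k s - p) (rhs N tt psi x k s) \<le> 0"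
proof -
  have "inner (x k s - p) (\<Sum>l\<in>{1..N} - {k}. psi (x k s) (x l s) *\<^sub>R (x l s - x k s)) \<le> 0"
    using psi_nonneg farthest by (intro inner_weighted_sum_towards_nonpos) auto
  then show ?thesis
    using \<open>N \<ge> 1\<close> \<open>alpha tt s = 1\<close> unfolding rhs_def by (simp add: divide_nonpos_nonneg)
qed

lemma attractive_phase_ball_invariant:
  fixes x :: "nat \<Rightarrow> real \<Rightarrow> 'a::real_inner"
  assumes "N \<ge> 1" and psi_nonneg: "\<And>y z. 0 \<le> psi y z" and "0 \<le> tt (2*n)"
    and cont: "\<And>i. i \<in> {1..N} \<Longrightarrow> continuous_on {tt (2*n)..tt (2*n+1)} (x i)"
    and ode: "\<And>i s. i \<in> {1..N} \<Longrightarrow> s \<in> {tt (2*n)<..<tt (2*n+1)} \<Longrightarrow>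
                (x i has_vector_derivative rhs N tt psi x i s) (at s)"
    and init: "\<And>l. l \<in> {1..N} \<Longrightarrow> norm (x l (tt (2*n)) - p) \<le> R"
    and "k \<in> {1..N}" and "s \<in> {tt (2*n)..tt (2*n+1)}"
  shows "norm (x k s - p) \<le> R"
proof (rule ball_invariant_if_farthest_moves_inward[OF _ cont ode _ init \<open>k \<in> _\<close> \<open>s \<in> _\<close>])
  show "inner (x k s - p) (rhs N tt psi x k s) \<le> 0"
    if "s \<in> {tt (2*n)<..<tt (2*n+1)}"
      and "\<And>l. l \<in> {1..N} \<Longrightarrow> norm (x l s - p) \<le> norm (x k s - p)" for k s
    using alpha_eq_1_attractive_phase[OF \<open>0 \<le> tt (2*n)\<close> that(1)] that(2)
    by (rule inner_rhs_nonpos_if_farthest[where x = x and k = k and p = p, OF \<open>N \<ge> 1\<close> psi_nonneg])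
qed simp

lemma norm_diff_le_diam:
  assumes "i \<in> {1..N}" "j \<in> {1..N}"
  shows "norm (x i s - x j s) \<le> diam N x s"
proof -
  have pairs: "{norm (x i s - x j s) | i j. i \<in> {1..N} \<and> j \<in> {1..N}} =
      (\<lambda>(i,j). norm (x i s - x j s)) ` ({1..N} \<times> {1..N})"
    by (auto; blast)
  show ?thesis
    unfolding diam_def pairs by (rule Max_ge) (use assms in auto)
qed

theorem lemma3p2:
  fixes N :: nat and psi :: "'a::euclidean_space \<Rightarrow> 'a \<Rightarrow> real"
    and tt :: "nat \<Rightarrow> real" and x :: "nat \<Rightarrow> real \<Rightarrow> 'a"
  assumes N2: "N \<ge> 2"
    and psi_pos: "\<And>y z. psi y z > 0"
    and psi_bdd: "bounded (range (\<lambda>p. psi (fst p) (snd p)))"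
    and psi_cont: "continuous_on UNIV (\<lambda>p. psi (fst p) (snd p))"
    and t_mono: "strict_mono tt" and t0: "tt 0 = 0"
    and t_lim: "filterlim tt at_top sequentially"
    and x_cont: "\<And>i. i \<in> {1..N} \<Longrightarrow> continuous_on {0..} (x i)"
    and x_ode: "\<And>i n s. i \<in> {1..N} \<Longrightarrow> s \<in> {tt n<..<tt (Suc n)} \<Longrightarrow>
                  (x i has_vector_derivative rhs N tt psi x i s) (at s)"
    and A1: "\<And>n. tt (2*n+2) - tt (2*n+1) < ln 2 / Kconst psi"
    and A2: "summable (\<lambda>p. ln (exp (Kconst psi * (tt (2*p+2) - tt (2*p+1)))
                              / (2 - exp (Kconst psi * (tt (2*p+2) - tt (2*p+1))))))"
    and A3: "filterlim (\<lambda>m. \<Sum>p<m. ln (max (1 - exp (- Kconst psi * (tt (2*p+1) - tt (2*p))))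
                 (1 - psi0 N tt psi x / Kconst psi * (1 - exp (- Kconst psi * (tt (2*p+1) - tt (2*p)))))))
               at_bot sequentially"
  shows "\<forall>n i j s \<tau>. i \<in> {1..N} \<longrightarrow> j \<in> {1..N} \<longrightarrow>
           s \<in> {tt (2*n)..tt (2*n+1)} \<longrightarrow> \<tau> \<in> {tt (2*n)..tt (2*n+1)} \<longrightarrow>
           norm (x i s - x j \<tau>) \<le> diam N x (tt (2*n))"
proof (intro allI impI)
  fix n i j s \<tau>
  assume i: "i \<in> {1..N}" and j: "j \<in> {1..N}"
    and s: "s \<in> {tt (2*n)..tt (2*n+1)}" and \<tau>: "\<tau> \<in> {tt (2*n)..tt (2*n+1)}"
  have "N \<ge> 1" and psi_nonneg: "\<And>y z. 0 \<le> psi y z"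
    using N2 psi_pos less_imp_le by auto
  have "0 \<le> tt (2*n)"
    using t0 t_mono by (metis le0 strict_mono_less_eq)
  have cont: "continuous_on {tt (2*n)..tt (2*n+1)} (x k)" if "k \<in> {1..N}" for k
    using \<open>0 \<le> tt (2*n)\<close> by (auto intro: continuous_on_subset[OF x_cont[OF that]])
  have ode: "(x k has_vector_derivative rhs N tt psi x k t) (at t)"
    if "k \<in> {1..N}" "t \<in> {tt (2*n)<..<tt (2*n+1)}" for k t
    using x_ode[of k t "2*n"] that by simp
  note phase = \<open>N \<ge> 1\<close> psi_nonneg \<open>0 \<le> tt (2*n)\<close> cont ode
  have near_j: "norm (x l (tt (2*n)) - x j \<tau>) \<le> diam N x (tt (2*n))" if l: "l \<in> {1..N}" for l
  proof -
    have "norm (x j \<tau> - x l (tt (2*n))) \<le> diam N x (tt (2*n))"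
      by (rule attractive_phase_ball_invariant[where x = x and p = "x l (tt (2*n))",
            OF phase norm_diff_le_diam[where x = x, OF _ l] j \<tau>])
    then show ?thesis by (simp add: norm_minus_commute)
  qed
  show "norm (x i s - x j \<tau>) \<le> diam N x (tt (2*n))"
    by (rule attractive_phase_ball_invariant[where x = x and p = "x j \<tau>", OF phase near_j i s])
qed

end
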